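(* Let $a_1,\dots,a_m\in\{0,1\}^n$ and $\epsilon_1,\dots,\epsilon_m\in\{0,1\}$, and consider the system of $\mathbb{F}_2$-linear equations $a_j\cdot b=\epsilon_j$ ($1\le j\le m$) in the unknown $b\in\{0,1\}^n$. Run the Triangular Basis Algorithm, with dimension $n+1$, on the vectors $x_j=a_j\Vert\epsilon_j\in\{0,1\}^{n+1}$. Then the system has a solution if and only if $av_{n+1}=1$ at the end of the algorithm.
   Context: All arithmetic is over $\mathbb{F}_2$ ($+$ is XOR, $\wedge$ is AND, $\cdot$ is the standard dot product). For a vector $v\in\{0,1\}^N$, $v[i]$ is its $i$-th bit and $v[a..b]$ the substring of bits $a$ through $b$ (empty if $a>b$); $\Vert$ is concatenation. Triangular Basis Algorithm (for vectors of length $N$). Input: $x_1,\dots,x_m\in\{0,1\}^N$ (modified in place). Auxiliary variables: bits $\mathrm{used}_j$ ($1\le j\le m$) initialized to $0$; bits $av_i$ ($1\le i\le N$) initialized to $1$; strings $b_i[(i+1)..N]$ ($1\le i\le N$) initialized to all zeros. The algorithm executes, for $i=1,\dots,N$ (outer loop) and, inside it, for $j=1,\dots,m$ (inner loop), the following four steps in order (iteration $(i,j)$): (1) $\mathrm{used}_j \leftarrow \mathrm{used}_j + (x_j[i]\wedge av_i)$; (2) $av_i\leftarrow av_i + (x_j[i]\wedge \mathrm{used}_j)$ (using the value of $\mathrm{used}_j$ just updated); (3) if $\mathrm{used}_j=1$: $b_i[(i+1)..N]\leftarrow b_i[(i+1)..N]+x_j[(i+1)..N]$; (4) if $x_j[i]=1$: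 $x_j[(i+1)..N]\leftarrow x_j[(i+1)..N]+b_i[(i+1)..N]$. *)

theory Defs
  imports Main "HOL-Library.Z2"
begin

text \<open>Bits are elements of the field F2 (type bit). A vector in F2^N is a
function nat => bit whose entries at indices 1..N are meaningful; the input
vectors x_1..x_m are x j for j in 1..m.\<close>

record tb_state =
  tb_x    :: "nat \<Rightarrow> nat \<Rightarrow> bit"   (* tb_x s j k = x_j[k] *)
  tb_used :: "nat \<Rightarrow> bit"
  tb_av   :: "nat \<Rightarrow> bit"
  tb_b    :: "nat \<Rightarrow> nat \<Rightarrow> bit"   (* tb_b s i k = b_i[k] *)

definition tb_step :: "nat \<Rightarrow> nat \<Rightarrow> nat \<Rightarrow> tb_state \<Rightarrow> tb_state" where
  "tb_step N i j s =
    (let x = tb_x s;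
         u = (tb_used s)(j := tb_used s j + x j i * tb_av s i);
         a = (tb_av s)(i := tb_av s i + x j i * u j);
         b = (if u j = 1
              then (tb_b s)(i := (\<lambda>k. if i < k \<and> k \<le> N then tb_b s i k + x j k else tb_b s i k))
              else tb_b s);
         x' = (if x j i = 1
               then x(j := (\<lambda>k. if i < k \<and> k \<le> N then x j k + b i k else x j k))
               else x)
     in \<lparr>tb_x = x', tb_used = u, tb_av = a, tb_b = b\<rparr>)"

definition tb_init :: "(nat \<Rightarrow> nat \<Rightarrow> bit) \<Rightarrow> tb_state" where
  "tb_init x = \<lparr>tb_x = x, tb_used = (\<lambda>_. 0), tb_av = (\<lambda>_. 1), tb_b = (\<lambda>_ _. 0)\<rparr>"

definition tb_run :: "nat \<Rightarrow> nat \<Rightarrow> (nat \<Rightarrow> nat \<Rightarrow> bit) \<Rightarrow> tb_state" where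
  "tb_run N m x = fold (\<lambda>i s. fold (\<lambda>j s'. tb_step N i j s') [1..<m+1] s) [1..<N+1] (tb_init x)"

end

theory Submission imports Defs begin

text \<open>The algorithm is Gaussian elimination over \<open>\<F>\<^sub>2\<close> on the row space of the
vectors \<open>x\<^sub>j\<close>: in column \<open>i\<close> the first unused row \<open>p\<close> with \<open>x\<^sub>p[i] = 1\<close> becomes the
pivot, \<open>b\<^sub>i\<close> stores its tail, \<open>av\<^sub>i\<close> drops to 0 and the pivot tail is added to all
later unused rows with a 1 in column \<open>i\<close>. Rows used earlier are already 0 from column
\<open>i\<close> on, so they leave the state unchanged. Hence, before column \<open>i\<close>, the vectors
orthogonal to all \<open>x\<^sub>j\<close> are exactly those orthogonal to the pivot rows
\<open>e\<^sub>i' + b\<^sub>i'\<close> (\<open>i' < i\<close>, \<open>av\<^sub>i' = 0\<close>) and to the tails from column \<open>i\<close> on of the unused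
rows. At the end only the unit upper triangular pivot rows remain, and back substitution
produces an orthogonal vector \<open>w\<close> with \<open>w[N] = 1\<close> exactly when column \<open>N\<close> has no pivot.
For \<open>N = n + 1\<close> and \<open>x\<^sub>j = a\<^sub>j \<parallel> \<epsilon>\<^sub>j\<close> such a \<open>w\<close> is a solution \<open>b\<close> extended by 1.\<close>

(* Keep + and * on bits as field operations instead of the library's XOR/AND normal form. *)
declare add_bit_eq_xor[simp del] mult_bit_eq_and[simp del]

lemma bit_add_self [simp]: "(a::bit) + a = 0"
  by (cases a) (simp_all add: add_bit_eq_xor)

lemma bit_add_eq_0_iff: "(a::bit) + b = 0 \<longleftrightarrow> a = b"
  by (cases a; cases b) (simp_all add: add_bit_eq_xor)

definition dot :: "nat \<Rightarrow> (nat \<Rightarrow> bit) \<Rightarrow> (nat \<Rightarrow> bit) \<Rightarrow> bit" where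
  "dot N u w = (\<Sum>k = 1..N. u k * w k)"

lemma dot_cong: "(\<And>k. 1 \<le> k \<Longrightarrow> k \<le> N \<Longrightarrow> u k = v k) \<Longrightarrow> dot N u w = dot N v w"
  unfolding dot_def by (rule sum.cong) auto

lemma dot_add_left: "dot N (\<lambda>k. u k + v k) w = dot N u w + dot N v w"
  unfolding dot_def by (simp add: distrib_right sum.distrib)

lemma back_substitution:
  fixes R :: "nat \<Rightarrow> nat \<Rightarrow> bit"
  assumes diag: "\<And>i. R i i = 1" and upper: "\<And>i k. k < i \<Longrightarrow> R i k = 0" and "\<not> Q N"
  shows "\<exists>w. w N = 1 \<and> (\<forall>i\<in>{1..N}. Q i \<longrightarrow> dot N (R i) w = 0)"
proof (cases "N = 0")
  case True
  then show ?thesis by auto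
next
  case False
  have "\<exists>w. w N = 1 \<and> (\<forall>i\<in>{t..N}. Q i \<longrightarrow> dot N (R i) w = 0)" if "1 \<le> t" "t \<le> N" for t
    using \<open>t \<le> N\<close> \<open>1 \<le> t\<close>
  proof (induction t rule: inc_induct)
    case base
    show ?case
      by (rule exI[of _ "\<lambda>_. 1"]) (use \<open>\<not> Q N\<close> in auto)
  next
    case (step t)
    then obtain w where w: "w N = 1" and orth: "\<forall>i\<in>{Suc t..N}. Q i \<longrightarrow> dot N (R i) w = 0"
      by auto
    show ?case
    proof (cases "Q t")
      case False
      then show ?thesis using w orth by (metis Suc_leI atLeastAtMost_iff le_neq_implies_less)
    next
      case True
      define w' where "w' = w(t := \<Sum>k\<in>{t<..N}. R t k * w k)"
      have later: "dot N (R i) w' = dot N (R i) w" if "t < i" for i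
        unfolding dot_def w'_def using that upper by (intro sum.cong) auto
      have "dot N (R t) w' = (\<Sum>k\<in>{t..N}. R t k * w' k)"
        unfolding dot_def by (rule sum.mono_neutral_right) (use step.prems upper in auto)
      also have "\<dots> = R t t * w' t + (\<Sum>k\<in>{t<..N}. R t k * w' k)"
        using step.hyps by (subst sum.head) auto
      also have "\<dots> = 0"
        using diag by (simp add: w'_def)
      finally have "dot N (R t) w' = 0" .
      then have "\<forall>i\<in>{t..N}. Q i \<longrightarrow> dot N (R i) w' = 0"
        using orth later by (metis Suc_leI atLeastAtMost_iff le_neq_implies_less)
      moreover have "w' N = 1" using w step.hyps by (simp add: w'_def)
      ultimately show ?thesis by blast
    qed
  qed
  with False show ?thesis by simp
qed

lemma augmented_system_solvable_iff:
  fixes n :: nat and a :: "nat \<Rightarrow> nat \<Rightarrow> bit" and eps :: "nat \<Rightarrow> bit"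
  defines "X \<equiv> \<lambda>j k. if k = n + 1 then eps j else a j k"
  shows "(\<exists>b. \<forall>j\<in>J. (\<Sum>k = 1..n. a j k * b k) = eps j)
     \<longleftrightarrow> (\<exists>w. w (n + 1) = 1 \<and> (\<forall>j\<in>J. dot (n + 1) (X j) w = 0))"
proof -
  have dot_X: "dot (n + 1) (X j) w = (\<Sum>k = 1..n. a j k * w k) + eps j * w (n + 1)" for j w
  proof -
    have "(\<Sum>k = 1..n. X j k * w k) = (\<Sum>k = 1..n. a j k * w k)"
      by (rule sum.cong) (auto simp: X_def)
    then show ?thesis by (simp add: dot_def X_def)
  qed
  have restrict: "(\<Sum>k = 1..n. a j k * (b(n + 1 := 1)) k) = (\<Sum>k = 1..n. a j k * b k)" for j b
    by (rule sum.cong) auto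
  show ?thesis
  proof
    assume "\<exists>b. \<forall>j\<in>J. (\<Sum>k = 1..n. a j k * b k) = eps j"
    then obtain b where "\<forall>j\<in>J. (\<Sum>k = 1..n. a j k * b k) = eps j" by blast
    then have "\<forall>j\<in>J. dot (n + 1) (X j) (b(n + 1 := 1)) = 0"
      unfolding dot_X restrict by simp
    then show "\<exists>w. w (n + 1) = 1 \<and> (\<forall>j\<in>J. dot (n + 1) (X j) w = 0)"
      by (intro exI[of _ "b(n + 1 := 1)"]) simp
  next
    assume "\<exists>w. w (n + 1) = 1 \<and> (\<forall>j\<in>J. dot (n + 1) (X j) w = 0)"
    then obtain w where "w (n + 1) = 1" "\<forall>j\<in>J. dot (n + 1) (X j) w = 0" by blast
    then have "\<forall>j\<in>J. (\<Sum>k = 1..n. a j k * w k) = eps j"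
      unfolding dot_X by (simp add: bit_add_eq_0_iff)
    then show "\<exists>b. \<forall>j\<in>J. (\<Sum>k = 1..n. a j k * b k) = eps j" by blast
  qed
qed

lemma tb_step_used:
  "tb_used (tb_step N i j s) = (tb_used s)(j := tb_used s j + tb_x s j i * tb_av s i)"
  by (simp add: tb_step_def Let_def)

lemma tb_step_av:
  "tb_av (tb_step N i j s) =
     (tb_av s)(i := tb_av s i + tb_x s j i * (tb_used s j + tb_x s j i * tb_av s i))"
  by (simp add: tb_step_def Let_def)

lemma tb_step_b:
  "tb_b (tb_step N i j s) =
     (if tb_used s j + tb_x s j i * tb_av s i = 1
      then (tb_b s)(i := (\<lambda>k. if i < k \<and> k \<le> N then tb_b s i k + tb_x s j k else tb_b s i k))
      else tb_b s)"
  by (simp add: tb_step_def Let_def)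

lemma tb_step_x:
  "tb_x (tb_step N i j s) =
     (if tb_x s j i = 1
      then (tb_x s)(j := (\<lambda>k. if i < k \<and> k \<le> N then tb_x s j k + tb_b (tb_step N i j s) i k
                               else tb_x s j k))
      else tb_x s)"
  unfolding tb_step_def Let_def by (simp only: tb_state.simps)

lemmas tb_step_simps = tb_step_used tb_step_av tb_step_b tb_step_x

definition is_pivot :: "tb_state \<Rightarrow> nat \<Rightarrow> nat \<Rightarrow> bool" where
  "is_pivot s i p \<longleftrightarrow> 1 \<le> p \<and> tb_used s p = 0 \<and> tb_x s p i = 1"

text \<open>The state after iterations \<open>(i, 1), \<dots>, (i, j\<^sub>0)\<close> of column \<open>i\<close>, started in \<open>s\<close>
with \<open>av\<^sub>i = 1\<close> and \<open>b\<^sub>i = 0\<close>, when \<open>p \<le> j\<^sub>0\<close> is the first pivot row: \<open>b\<^sub>i\<close> is the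
tail of \<open>x\<^sub>p\<close>, which has been added to itself and to the later unused rows with a 1 in
column \<open>i\<close>.\<close>
definition pivot_eliminated :: "nat \<Rightarrow> nat \<Rightarrow> tb_state \<Rightarrow> nat \<Rightarrow> nat \<Rightarrow> tb_state" where
  "pivot_eliminated N i s p j\<^sub>0 =
    \<lparr>tb_x = \<lambda>j k. if j = p \<and> i < k \<and> k \<le> N then 0
       else if p < j \<and> j \<le> j\<^sub>0 \<and> tb_used s j = 0 \<and> tb_x s j i = 1 \<and> i < k \<and> k \<le> N
       then tb_x s j k + tb_x s p k else tb_x s j k,
     tb_used = (tb_used s)(p := 1),
     tb_av = (tb_av s)(i := 0),
     tb_b = (tb_b s)(i := \<lambda>k. if i < k \<and> k \<le> N then tb_x s p k else 0)\<rparr>"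

lemma tb_step_no_effect:
  assumes "tb_x s j i = 1 \<longrightarrow> tb_used s j = 1"
    and "tb_used s j = 1 \<Longrightarrow> \<forall>k. i \<le> k \<and> k \<le> N \<longrightarrow> tb_x s j k = 0" and "i \<le> N"
  shows "tb_step N i j s = s"
proof -
  have x0: "tb_x s j i = 0" using assms by (cases "tb_x s j i") auto
  show ?thesis
  proof (rule tb_state.equality)
    show "tb_b (tb_step N i j s) = tb_b s"
      using assms(2) by (auto simp add: tb_step_b x0 fun_eq_iff)
  qed (simp_all add: tb_step_simps x0)
qed

lemma tb_step_first_pivot:
  assumes "is_pivot s i p" "tb_av s i = 1" "tb_b s i = (\<lambda>_. 0)"
  shows "tb_step N i p s = pivot_eliminated N i s p p"
  using assms
  by (intro tb_state.equality) (auto simp: tb_step_simps pivot_eliminated_def is_pivot_def fun_eq_iff)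

lemma tb_step_after_pivot:
  assumes "p \<le> j\<^sub>0" "i \<le> N"
    and "tb_used s (Suc j\<^sub>0) = 1 \<Longrightarrow> \<forall>k. i \<le> k \<and> k \<le> N \<longrightarrow> tb_x s (Suc j\<^sub>0) k = 0"
  shows "tb_step N i (Suc j\<^sub>0) (pivot_eliminated N i s p j\<^sub>0) = pivot_eliminated N i s p (Suc j\<^sub>0)"
proof (rule tb_state.equality)
  show "tb_av (tb_step N i (Suc j\<^sub>0) (pivot_eliminated N i s p j\<^sub>0)) =
      tb_av (pivot_eliminated N i s p (Suc j\<^sub>0))"
    using assms by (cases "tb_used s (Suc j\<^sub>0)") (auto simp: tb_step_av pivot_eliminated_def)
  show "tb_x (tb_step N i (Suc j\<^sub>0) (pivot_eliminated N i s p j\<^sub>0)) =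
      tb_x (pivot_eliminated N i s p (Suc j\<^sub>0))"
    using assms by (auto simp: tb_step_x tb_step_b pivot_eliminated_def fun_eq_iff le_Suc_eq)
qed (use assms in \<open>auto simp: tb_step_simps pivot_eliminated_def fun_eq_iff\<close>)

lemma fold_tb_step_column:
  assumes used_zero: "\<forall>j\<in>{1..m}. tb_used s j = 1 \<longrightarrow> (\<forall>k. i \<le> k \<and> k \<le> N \<longrightarrow> tb_x s j k = 0)"
    and "tb_av s i = 1" "tb_b s i = (\<lambda>_. 0)" "i \<le> N" "j\<^sub>0 \<le> m"
  shows "fold (tb_step N i) [1..<j\<^sub>0 + 1] s =
     (if \<exists>p\<le>j\<^sub>0. is_pivot s i p then pivot_eliminated N i s (LEAST p. is_pivot s i p) j\<^sub>0 else s)"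
  using \<open>j\<^sub>0 \<le> m\<close>
proof (induction j\<^sub>0)
  case 0
  then show ?case by (auto simp: is_pivot_def)
next
  case (Suc j\<^sub>0)
  have IH: "fold (tb_step N i) [1..<j\<^sub>0 + 1] s =
     (if \<exists>p\<le>j\<^sub>0. is_pivot s i p then pivot_eliminated N i s (LEAST p. is_pivot s i p) j\<^sub>0 else s)"
    using Suc by simp
  have fold_Suc: "fold (tb_step N i) [1..<Suc j\<^sub>0 + 1] s
      = tb_step N i (Suc j\<^sub>0) (fold (tb_step N i) [1..<j\<^sub>0 + 1] s)"
    by simp
  have row: "tb_used s (Suc j\<^sub>0) = 1 \<Longrightarrow> \<forall>k. i \<le> k \<and> k \<le> N \<longrightarrow> tb_x s (Suc j\<^sub>0) k = 0"
    using used_zero Suc.prems by auto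
  consider (earlier) "\<exists>p\<le>j\<^sub>0. is_pivot s i p"
    | (now) "\<not> (\<exists>p\<le>j\<^sub>0. is_pivot s i p)" "is_pivot s i (Suc j\<^sub>0)"
    | (none) "\<not> (\<exists>p\<le>Suc j\<^sub>0. is_pivot s i p)"
    using le_Suc_eq by blast
  then show ?case
  proof cases
    case earlier
    then have "(LEAST p. is_pivot s i p) \<le> j\<^sub>0" by (meson Least_le le_trans)
    then show ?thesis
      unfolding fold_Suc IH using earlier tb_step_after_pivot[OF _ \<open>i \<le> N\<close> row]
      by (auto intro: le_SucI)
  next
    case now
    then have "(LEAST p. is_pivot s i p) = Suc j\<^sub>0"
      by (intro Least_equality) (auto simp: not_less_eq_eq)
    then show ?thesis
      unfolding fold_Suc IH using now tb_step_first_pivot assms(2,3) by auto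
  next
    case none
    then have "tb_x s (Suc j\<^sub>0) i = 1 \<longrightarrow> tb_used s (Suc j\<^sub>0) = 1"
      by (auto simp: is_pivot_def)
    then show ?thesis
      unfolding fold_Suc IH using none tb_step_no_effect[OF _ row \<open>i \<le> N\<close>] by auto
  qed
qed

definition tb_column :: "nat \<Rightarrow> nat \<Rightarrow> nat \<Rightarrow> tb_state \<Rightarrow> tb_state" where
  "tb_column N m i = fold (tb_step N i) [1..<m + 1]"

lemma tb_run_eq_fold_column: "tb_run N m X = fold (tb_column N m) [1..<N + 1] (tb_init X)"
  unfolding tb_run_def tb_column_def[abs_def] ..

definition pivot_row :: "tb_state \<Rightarrow> nat \<Rightarrow> nat \<Rightarrow> bit" where
  "pivot_row s i' k = (if k = i' then 1 else if i' < k then tb_b s i' k else 0)"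

definition row_tail :: "tb_state \<Rightarrow> nat \<Rightarrow> nat \<Rightarrow> nat \<Rightarrow> bit" where
  "row_tail s i j k = (if k < i then 0 else tb_x s j k)"

definition tb_invariant :: "nat \<Rightarrow> nat \<Rightarrow> (nat \<Rightarrow> nat \<Rightarrow> bit) \<Rightarrow> nat \<Rightarrow> tb_state \<Rightarrow> bool" where
  "tb_invariant N m X i s \<longleftrightarrow>
     (\<forall>w. (\<forall>j\<in>{1..m}. dot N (X j) w = 0) \<longleftrightarrow>
          (\<forall>i'\<in>{1..<i}. tb_av s i' = 0 \<longrightarrow> dot N (pivot_row s i') w = 0) \<and>
          (\<forall>j\<in>{1..m}. tb_used s j = 0 \<longrightarrow> dot N (row_tail s i j) w = 0))
   \<and> (\<forall>j\<in>{1..m}. tb_used s j = 1 \<longrightarrow> (\<forall>k. i \<le> k \<and> k \<le> N \<longrightarrow> tb_x s j k = 0))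
   \<and> (\<forall>i'\<ge>i. tb_av s i' = 1 \<and> tb_b s i' = (\<lambda>_. 0))"

lemma tb_invariant_init: "tb_invariant N m X 1 (tb_init X)"
proof -
  have "dot N (row_tail (tb_init X) 1 j) w = dot N (X j) w" for j w
    by (rule dot_cong) (simp add: row_tail_def tb_init_def)
  then show ?thesis by (simp add: tb_invariant_def tb_init_def)
qed

lemma tb_invariant_no_pivot:
  assumes inv: "tb_invariant N m X i s" and "1 \<le> i"
    and no_pivot: "\<And>j. j \<in> {1..m} \<Longrightarrow> tb_used s j = 0 \<Longrightarrow> tb_x s j i = 0"
  shows "tb_invariant N m X (Suc i) s"
proof -
  have tail: "row_tail s (Suc i) j = row_tail s i j" if "j \<in> {1..m}" "tb_used s j = 0" for j
    using no_pivot[OF that] by (auto simp: row_tail_def fun_eq_iff less_Suc_eq)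
  have "{1..<Suc i} = insert i {1..<i}" using \<open>1 \<le> i\<close> by auto
  then show ?thesis
    using inv tail unfolding tb_invariant_def by (auto simp del: atLeastLessThan_iff)
qed

lemma dot_pivot_row_pivot_eliminated:
  assumes "tb_x s p i = 1"
  shows "dot N (pivot_row (pivot_eliminated N i s p j\<^sub>0) i) w = dot N (row_tail s i p) w"
  by (rule dot_cong) (auto simp: pivot_row_def row_tail_def pivot_eliminated_def assms)

lemma dot_row_tail_pivot_eliminated:
  assumes "j \<noteq> p" "j \<le> j\<^sub>0" "tb_used s j = 0" "tb_x s j i = 1 \<Longrightarrow> p < j" "tb_x s p i = 1"
  shows "dot N (row_tail (pivot_eliminated N i s p j\<^sub>0) (Suc i) j) w =
     dot N (row_tail s i j) w + tb_x s j i * dot N (row_tail s i p) w"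
proof (cases "tb_x s j i")
  case zero
  have "dot N (row_tail (pivot_eliminated N i s p j\<^sub>0) (Suc i) j) w = dot N (row_tail s i j) w"
    using assms zero by (intro dot_cong) (auto simp: row_tail_def pivot_eliminated_def less_Suc_eq)
  then show ?thesis using zero by simp
next
  case one
  have "dot N (row_tail (pivot_eliminated N i s p j\<^sub>0) (Suc i) j) w =
      dot N (\<lambda>k. row_tail s i j k + row_tail s i p k) w"
    using assms one by (intro dot_cong) (auto simp: row_tail_def pivot_eliminated_def less_Suc_eq)
  then show ?thesis using one by (simp add: dot_add_left)
qed

lemma tb_invariant_pivot:
  assumes inv: "tb_invariant N m X i s" and "1 \<le> i"
    and pivot: "is_pivot s i p" "p \<le> m" and first: "\<And>j. j < p \<Longrightarrow> \<not> is_pivot s i j"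
  shows "tb_invariant N m X (Suc i) (pivot_eliminated N i s p m)"
proof -
  let ?s' = "pivot_eliminated N i s p m"
  have p: "p \<in> {1..m}" "tb_used s p = 0" "tb_x s p i = 1"
    using pivot by (auto simp: is_pivot_def)
  have used': "tb_used ?s' = (tb_used s)(p := 1)" and av': "tb_av ?s' = (tb_av s)(i := 0)"
    by (simp_all add: pivot_eliminated_def)
  have old_pivot_rows: "pivot_row ?s' i' = pivot_row s i'" if "i' < i" for i'
    using that by (auto simp: pivot_row_def pivot_eliminated_def fun_eq_iff)
  have new_tails: "dot N (row_tail ?s' (Suc i) j) w =
      dot N (row_tail s i j) w + tb_x s j i * dot N (row_tail s i p) w"
    if "j \<in> {1..m}" "tb_used s j = 0" "j \<noteq> p" for j w
  proof (rule dot_row_tail_pivot_eliminated)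
    show "p < j" if "tb_x s j i = 1"
      using first[of j] \<open>j \<noteq> p\<close> that \<open>j \<in> {1..m}\<close> \<open>tb_used s j = 0\<close>
      by (auto simp: is_pivot_def nat_neq_iff)
  qed (use that p in auto)
  have old_pivots: "(\<forall>i'\<in>{1..<i}. tb_av ?s' i' = 0 \<longrightarrow> dot N (pivot_row ?s' i') w = 0)
      \<longleftrightarrow> (\<forall>i'\<in>{1..<i}. tb_av s i' = 0 \<longrightarrow> dot N (pivot_row s i') w = 0)" for w
    using old_pivot_rows unfolding av' by auto
  have "{1..<Suc i} = insert i {1..<i}" using \<open>1 \<le> i\<close> by auto
  then have pivot_rows: "(\<forall>i'\<in>{1..<Suc i}. tb_av ?s' i' = 0 \<longrightarrow> dot N (pivot_row ?s' i') w = 0)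
      \<longleftrightarrow> dot N (row_tail s i p) w = 0 \<and>
          (\<forall>i'\<in>{1..<i}. tb_av s i' = 0 \<longrightarrow> dot N (pivot_row s i') w = 0)" for w
    using old_pivots dot_pivot_row_pivot_eliminated[OF p(3)] av' by (simp only: ball_simps) simp
  have tails: "(\<forall>j\<in>{1..m}. tb_used ?s' j = 0 \<longrightarrow> dot N (row_tail ?s' (Suc i) j) w = 0)
      \<longleftrightarrow> (\<forall>j\<in>{1..m}. tb_used s j = 0 \<longrightarrow> dot N (row_tail s i j) w = 0)"
    if "dot N (row_tail s i p) w = 0" for w
    using new_tails that p unfolding used' by auto
  \<comment> \<open>Both sides force \<open>w\<close> to be orthogonal to the tail of the pivot row \<open>p\<close>;
    given that, the remaining conditions coincide.\<close>
  have kernel: "(\<forall>j\<in>{1..m}. dot N (X j) w = 0) \<longleftrightarrow>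
      (\<forall>i'\<in>{1..<Suc i}. tb_av ?s' i' = 0 \<longrightarrow> dot N (pivot_row ?s' i') w = 0) \<and>
      (\<forall>j\<in>{1..m}. tb_used ?s' j = 0 \<longrightarrow> dot N (row_tail ?s' (Suc i) j) w = 0)" for w
    using inv pivot_rows[of w] tails[of w] p unfolding tb_invariant_def by blast
  moreover have "\<forall>j\<in>{1..m}. tb_used ?s' j = 1 \<longrightarrow> (\<forall>k. Suc i \<le> k \<and> k \<le> N \<longrightarrow> tb_x ?s' j k = 0)"
    using inv unfolding tb_invariant_def by (auto simp: pivot_eliminated_def)
  moreover have "\<forall>i'\<ge>Suc i. tb_av ?s' i' = 1 \<and> tb_b ?s' i' = (\<lambda>_. 0)"
    using inv unfolding tb_invariant_def by (auto simp: pivot_eliminated_def)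
  ultimately show ?thesis unfolding tb_invariant_def by blast
qed

lemma tb_invariant_column:
  assumes inv: "tb_invariant N m X i s" and "1 \<le> i" "i \<le> N"
  shows "tb_invariant N m X (Suc i) (tb_column N m i s)"
proof -
  have column: "tb_column N m i s =
     (if \<exists>p\<le>m. is_pivot s i p then pivot_eliminated N i s (LEAST p. is_pivot s i p) m else s)"
    using inv \<open>i \<le> N\<close> unfolding tb_column_def tb_invariant_def
    by (intro fold_tb_step_column) auto
  show ?thesis
  proof (cases "\<exists>p\<le>m. is_pivot s i p")
    case True
    then have "is_pivot s i (LEAST p. is_pivot s i p)" "(LEAST p. is_pivot s i p) \<le> m"
      by (auto intro: LeastI Least_le le_trans)
    with True show ?thesis
      unfolding column using tb_invariant_pivot[OF inv \<open>1 \<le> i\<close>] not_less_Least by auto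
  next
    case False
    then have "tb_x s j i = 0" if "j \<in> {1..m}" "tb_used s j = 0" for j
      using that by (auto simp: is_pivot_def)
    then show ?thesis
      unfolding column if_not_P[OF False] using tb_invariant_no_pivot[OF inv \<open>1 \<le> i\<close>] by simp
  qed
qed

lemma tb_invariant_tb_run: "tb_invariant N m X (Suc N) (tb_run N m X)"
proof -
  have "tb_invariant N m X (Suc i) (fold (tb_column N m) [1..<Suc i] (tb_init X))" if "i \<le> N" for i
    using that
  proof (induction i)
    case 0
    then show ?case using tb_invariant_init by simp
  next
    case (Suc i)
    then show ?case using tb_invariant_column by simp
  qed
  then show ?thesis by (simp add: tb_run_eq_fold_column)
qed

lemma dot_pivot_row_last:
  assumes "1 \<le> N"
  shows "dot N (pivot_row s N) w = w N"
proof -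
  have "dot N (pivot_row s N) w = (\<Sum>k = 1..N. if k = N then w k else 0)"
    unfolding dot_def by (rule sum.cong) (auto simp: pivot_row_def)
  then show ?thesis using assms by simp
qed

lemma tb_av_tb_run_iff:
  assumes "1 \<le> N"
  shows "tb_av (tb_run N m X) N = 1 \<longleftrightarrow> (\<exists>w. w N = 1 \<and> (\<forall>j\<in>{1..m}. dot N (X j) w = 0))"
proof -
  let ?S = "tb_run N m X"
  have inv: "(\<forall>j\<in>{1..m}. dot N (X j) w = 0) \<longleftrightarrow>
      (\<forall>i'\<in>{1..<Suc N}. tb_av ?S i' = 0 \<longrightarrow> dot N (pivot_row ?S i') w = 0) \<and>
      (\<forall>j\<in>{1..m}. tb_used ?S j = 0 \<longrightarrow> dot N (row_tail ?S (Suc N) j) w = 0)" for w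
    using tb_invariant_tb_run[of N m X] unfolding tb_invariant_def by blast
  have "dot N (row_tail ?S (Suc N) j) w = 0" for j w
    by (simp add: dot_def row_tail_def)
  moreover have "{1..<Suc N} = {1..N}" by auto
  ultimately have kernel: "(\<forall>j\<in>{1..m}. dot N (X j) w = 0) \<longleftrightarrow>
      (\<forall>i\<in>{1..N}. tb_av ?S i = 0 \<longrightarrow> dot N (pivot_row ?S i) w = 0)" for w
    using inv[of w] by simp
  show ?thesis
  proof
    assume "tb_av ?S N = 1"
    then show "\<exists>w. w N = 1 \<and> (\<forall>j\<in>{1..m}. dot N (X j) w = 0)"
      unfolding kernel by (intro back_substitution) (auto simp: pivot_row_def)
  next
    assume "\<exists>w. w N = 1 \<and> (\<forall>j\<in>{1..m}. dot N (X j) w = 0)"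
    then obtain w where "w N = 1" "\<forall>i\<in>{1..N}. tb_av ?S i = 0 \<longrightarrow> dot N (pivot_row ?S i) w = 0"
      unfolding kernel by blast
    then show "tb_av ?S N = 1"
      using assms dot_pivot_row_last[OF assms, of ?S w] by force
  qed
qed

theorem mainTheorem7:
  fixes n m :: nat and a :: "nat \<Rightarrow> nat \<Rightarrow> bit" and eps :: "nat \<Rightarrow> bit"
  shows "(\<exists>b :: nat \<Rightarrow> bit. \<forall>j \<in> {1..m}. (\<Sum>k = 1..n. a j k * b k) = eps j)
     \<longleftrightarrow> tb_av (tb_run (n + 1) m (\<lambda>j k. if k = n + 1 then eps j else a j k)) (n + 1) = 1"
  unfolding augmented_system_solvable_iff tb_av_tb_run_iff[OF le_add2] ..

end
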